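(* Let $k\ge5$ be an integer, let $\ell=1$, and let $G$ be a finite digraph. Then $$s_X(G)\le\frac{(k-1)^{k-1}}{(k+1)^{k+1}}\alpha^{k+2}.$$
   Context: Digraphs are finite, without loops; $xy$ denotes an arc from $x$ to $y$; two vertices are adjacent if at least one of $xy,yx$ is an arc. The oriented star $S_{k,1}$ has a center $c$, a set $O$ of $k$ out-leaves and one in-leaf $i$; its arcs are exactly $co$ ($o\in O$) and $ic$. For a digraph $G$ on $n$ vertices, let $\phi$ be a uniformly random map from $V(S_{k,1})$ to $V(G)$ (all $n^{k+2}$ maps equally likely), and let $\mathcal S$ be the set of maps $\phi$ that are isomorphisms from $S_{k,1}$ onto $G[\mathrm{Im}\,\phi]$ (in particular injective). $\rho(v)$ is the number of vertices adjacent to $v$ divided by $n$. $X=\{v:\rho(v)\ge1/2\}$, $\alpha=|X|/n$, and $s_X(G)=\Pr[\phi\in\mathcal S,\ \mathrm{Im}\,\phi\subseteq X]$. *)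

theory Defs
  imports Complex_Main "HOL-Library.FuncSet"
begin

text \<open>The oriented star S_{k,1} has vertex set {0..k+1}: 0 is the center c, 1 is the in-leaf i,
and 2..k+1 are the k out-leaves.\<close>

definition star_arc :: "nat \<Rightarrow> nat \<Rightarrow> bool" where
  "star_arc u w \<longleftrightarrow> (u = 0 \<and> 2 \<le> w) \<or> (u = 1 \<and> w = 0)"

definition adj :: "('a \<Rightarrow> 'a \<Rightarrow> bool) \<Rightarrow> 'a \<Rightarrow> 'a \<Rightarrow> bool" where
  "adj A x y \<longleftrightarrow> A x y \<or> A y x"

definition rho :: "'a set \<Rightarrow> ('a \<Rightarrow> 'a \<Rightarrow> bool) \<Rightarrow> 'a \<Rightarrow> real" where
  "rho V A v = real (card {u \<in> V. adj A v u}) / real (card V)"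

definition Xset :: "'a set \<Rightarrow> ('a \<Rightarrow> 'a \<Rightarrow> bool) \<Rightarrow> 'a set" where
  "Xset V A = {v \<in> V. rho V A v \<ge> 1/2}"

definition alpha :: "'a set \<Rightarrow> ('a \<Rightarrow> 'a \<Rightarrow> bool) \<Rightarrow> real" where
  "alpha V A = real (card (Xset V A)) / real (card V)"

definition star_iso :: "nat \<Rightarrow> ('a \<Rightarrow> 'a \<Rightarrow> bool) \<Rightarrow> (nat \<Rightarrow> 'a) \<Rightarrow> bool" where
  "star_iso k A phi \<longleftrightarrow> inj_on phi {0..k+1} \<and>
     (\<forall>u\<in>{0..k+1}. \<forall>w\<in>{0..k+1}. A (phi u) (phi w) \<longleftrightarrow> star_arc u w)"

definition sX :: "nat \<Rightarrow> 'a set \<Rightarrow> ('a \<Rightarrow> 'a \<Rightarrow> bool) \<Rightarrow> real" where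
  "sX k V A = real (card {phi \<in> {0..k+1} \<rightarrow>\<^sub>E V. star_iso k A phi \<and> phi ` {0..k+1} \<subseteq> Xset V A})
              / real (card V) ^ (k + 2)"

end

theory Submission
  imports Defs "HOL-Analysis.Analysis"
begin

text \<open>Fix an out-leaf v and the center c, an in-neighbour of v. The in-leaf is then a
  non-out-neighbour of c and every other out-leaf an out-neighbour of c, none of them adjacent
  to v; with the in-neighbourhood of v these form three disjoint subsets of X, of sizes p, b, o
  with p + b + o \<le> |X|. For fixed v there are thus at most p choices of c, each allowing at
  most b o^(k-1) stars, and AM-GM gives p b o^(k-1) \<le> (k-1)^(k-1)/(k+1)^(k+1) |X|^(k+1).
  Summing over v gives the claim; only k \<ge> 2 is needed.\<close>

lemma prod_le_mean_power:
  fixes x :: "'a \<Rightarrow> real"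
  assumes "finite S" and "\<And>i. i \<in> S \<Longrightarrow> x i \<ge> 0"
  shows "(\<Prod>i\<in>S. x i) \<le> ((\<Sum>i\<in>S. x i) / card S) ^ card S"
proof (cases "S = {}")
  case False
  define P where "P = (\<Prod>i\<in>S. x i)"
  have n: "card S > 0" using assms(1) False by (simp add: card_gt_0_iff)
  have P: "P \<ge> 0" unfolding P_def by (simp add: assms(2) prod_nonneg)
  have "root (card S) P \<le> (\<Sum>i\<in>S. x i) / card S"
    using arith_geom_mean[OF assms(1) False assms(2)] n P
    by (simp add: P_def sum_divide_distrib root_powr_inverse)
  then have "root (card S) P ^ card S \<le> ((\<Sum>i\<in>S. x i) / card S) ^ card S"
    using P by (intro power_mono) (simp_all add: real_root_ge_zero)
  then show ?thesis using n P unfolding P_def by simp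
qed simp

lemma mult_mult_power_le_sum_power:
  fixes p b c s :: real and k :: nat
  assumes k: "k \<ge> 2" and "p \<ge> 0" "b \<ge> 0" "c \<ge> 0" and "p + b + c \<le> s"
  shows "p * b * c ^ (k - 1) \<le> real (k - 1) ^ (k - 1) / real (k + 1) ^ (k + 1) * s ^ (k + 1)"
proof -
  \<comment> \<open>AM-GM for the k+1 numbers p, b and k-1 copies of c/(k-1).\<close>
  define x where "x j = (if j = 0 then p else if j = 1 then b else c / real (k - 1))" for j :: nat
  have split: "{0..k} = insert 0 (insert 1 {2..k})" using k by auto
  have k1: "real (k - 1) > 0" using k by simp
  have "(\<Sum>j\<in>{0..k}. x j) = p + b + c"
    unfolding split using k k1 by (simp add: x_def of_nat_diff)
  moreover have "(\<Prod>j\<in>{0..k}. x j) = p * b * (c / real (k - 1)) ^ (k - 1)"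
    unfolding split using k by (simp add: x_def of_nat_diff)
  moreover have "(\<Prod>j\<in>{0..k}. x j) \<le> ((\<Sum>j\<in>{0..k}. x j) / card {0..k}) ^ card {0..k}"
    by (rule prod_le_mean_power) (use assms in \<open>auto simp: x_def\<close>)
  ultimately have "p * b * c ^ (k - 1) / real (k - 1) ^ (k - 1) \<le> ((p + b + c) / real (k + 1)) ^ (k + 1)"
    by (simp add: power_divide)
  also have "\<dots> \<le> (s / real (k + 1)) ^ (k + 1)"
    using assms by (intro power_mono divide_right_mono) auto
  finally show ?thesis using k1 by (simp add: field_simps power_divide)
qed

definition star_embeddings :: "nat \<Rightarrow> 'a set \<Rightarrow> ('a \<Rightarrow> 'a \<Rightarrow> bool) \<Rightarrow> 'a set \<Rightarrow> (nat \<Rightarrow> 'a) set" where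
  "star_embeddings k V A X = {phi \<in> {0..k+1} \<rightarrow>\<^sub>E V. star_iso k A phi \<and> phi ` {0..k+1} \<subseteq> X}"

definition leaf_candidates :: "'a set \<Rightarrow> ('a \<Rightarrow> 'a \<Rightarrow> bool) \<Rightarrow> 'a \<Rightarrow> 'a \<Rightarrow> bool \<Rightarrow> 'a set" where
  "leaf_candidates X A v c out = {x \<in> X. A c x = out \<and> \<not> adj A v x \<and> x \<noteq> v}"

definition star_slots :: "'a set \<Rightarrow> ('a \<Rightarrow> 'a \<Rightarrow> bool) \<Rightarrow> 'a \<Rightarrow> 'a \<Rightarrow> nat \<Rightarrow> 'a set" where
  "star_slots X A v c j =
     (if j = 0 then {c} else if j = 1 then leaf_candidates X A v c False
      else if j = 2 then {v} else leaf_candidates X A v c True)"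

lemma star_embedding_in_slots:
  assumes "phi \<in> star_embeddings k V A X" and "k \<ge> 1"
  shows "phi 2 \<in> X" "phi 0 \<in> {c \<in> X. A c (phi 2)}"
    and "phi \<in> PiE {0..k+1} (star_slots X A (phi 2) (phi 0))"
proof -
  have ext: "phi \<in> extensional {0..k+1}" and inj: "inj_on phi {0..k+1}"
    and arc: "\<And>u w. u \<le> k+1 \<Longrightarrow> w \<le> k+1 \<Longrightarrow> A (phi u) (phi w) \<longleftrightarrow> star_arc u w"
    and inX: "\<And>j. j \<le> k+1 \<Longrightarrow> phi j \<in> X"
    using assms(1) unfolding star_embeddings_def star_iso_def by (auto simp: PiE_def)
  have ne: "phi u \<noteq> phi w" if "u \<le> k+1" "w \<le> k+1" "u \<noteq> w" for u w
    using inj that unfolding inj_on_def by auto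
  show "phi 2 \<in> X" "phi 0 \<in> {c \<in> X. A c (phi 2)}"
    using inX[of 2] inX[of 0] arc[of 0 2] assms(2) by (auto simp: star_arc_def)
  have "phi j \<in> star_slots X A (phi 2) (phi 0) j" if j: "j \<le> k+1" for j
  proof -
    consider "j = 0" | "j = 1" | "j = 2" | "j \<ge> 3" by linarith
    then show ?thesis
    proof cases
      case 2
      then show ?thesis using inX[of 1] arc[of 0 1] arc[of 1 2] arc[of 2 1] ne[of 1 2] assms(2)
        by (auto simp: star_slots_def leaf_candidates_def adj_def star_arc_def)
    next
      case 4
      then show ?thesis using j inX[of j] arc[of 0 j] arc[of j 2] arc[of 2 j] ne[of j 2] assms(2)
        by (auto simp: star_slots_def leaf_candidates_def adj_def star_arc_def)
    qed (auto simp: star_slots_def)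
  qed
  with ext show "phi \<in> PiE {0..k+1} (star_slots X A (phi 2) (phi 0))"
    by (auto simp: PiE_iff)
qed

lemma card_PiE_star_slots:
  assumes "k \<ge> 1"
  shows "card (PiE {0..k+1} (star_slots X A v c))
       = card (leaf_candidates X A v c False) * card (leaf_candidates X A v c True) ^ (k - 1)"
proof -
  have split: "{0..k+1} = insert 0 (insert 1 (insert 2 {3..k+1}))" using assms by auto
  have "card (PiE {0..k+1} (star_slots X A v c)) = (\<Prod>j\<in>{0..k+1}. card (star_slots X A v c j))"
    by (simp add: card_PiE)
  also have "\<dots> = card (leaf_candidates X A v c False) * (\<Prod>j\<in>{3..k+1}. card (leaf_candidates X A v c True))"
    unfolding split by (simp add: star_slots_def)
  finally show ?thesis by simp
qed

lemma card_in_nbhd_leaf_candidates_le: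
  assumes "finite X"
  shows "card {c \<in> X. A c v} + card (leaf_candidates X A v c False) + card (leaf_candidates X A v c True)
       \<le> card X"
proof -
  have "card ({c \<in> X. A c v} \<union> leaf_candidates X A v c False \<union> leaf_candidates X A v c True)
      = card {c \<in> X. A c v} + card (leaf_candidates X A v c False) + card (leaf_candidates X A v c True)"
    using assms by (subst card_Un_disjoint; auto simp: card_Un_disjoint leaf_candidates_def adj_def)+
  moreover have "card ({c \<in> X. A c v} \<union> leaf_candidates X A v c False \<union> leaf_candidates X A v c True)
      \<le> card X"
    using assms by (intro card_mono) (auto simp: leaf_candidates_def)
  ultimately show ?thesis by linarith
qed

lemma sum_star_slots_le:
  assumes "finite X" and "k \<ge> 2"
  shows "(\<Sum>c\<in>{c \<in> X. A c v}. real (card (PiE {0..k+1} (star_slots X A v c))))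
       \<le> real (k - 1) ^ (k - 1) / real (k + 1) ^ (k + 1) * real (card X) ^ (k + 1)"
    (is "(\<Sum>c\<in>?N. ?f c) \<le> ?B")
proof (cases "?N = {}")
  case False
  define p where "p = card ?N"
  have p: "real p > 0" using False assms(1) unfolding p_def by (simp add: card_gt_0_iff)
  have bound: "real p * ?f c \<le> ?B" for c
  proof -
    let ?b = "card (leaf_candidates X A v c False)" and ?o = "card (leaf_candidates X A v c True)"
    have "real p + real ?b + real ?o \<le> real (card X)"
      using card_in_nbhd_leaf_candidates_le[OF assms(1), of A v c] unfolding p_def by linarith
    then have "real p * real ?b * real ?o ^ (k - 1) \<le> ?B"
      by (intro mult_mult_power_le_sum_power[OF assms(2)]) auto
    then show ?thesis using card_PiE_star_slots[of k X A v c] assms(2) by (simp add: mult.assoc)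
  qed
  then have "(\<Sum>c\<in>?N. ?f c) \<le> (\<Sum>c\<in>?N. ?B / real p)"
    using divide_right_mono[OF bound, of "real p"] p by (intro sum_mono) simp
  also have "\<dots> = ?B" using p unfolding p_def by simp
  finally show ?thesis .
next
  case True
  then show ?thesis by (simp only: sum.empty) simp
qed

lemma card_star_embeddings_le:
  assumes "finite X" and "k \<ge> 2"
  shows "real (card (star_embeddings k V A X))
       \<le> real (k - 1) ^ (k - 1) / real (k + 1) ^ (k + 1) * real (card X) ^ (k + 2)"
proof -
  let ?N = "\<lambda>v. {c \<in> X. A c v}"
  let ?P = "\<lambda>v c. PiE {0..k+1} (star_slots X A v c)"
  have fin: "finite (?P v c)" for v c
    using assms(1) by (intro finite_PiE) (auto simp: star_slots_def leaf_candidates_def)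
  have "star_embeddings k V A X \<subseteq> (\<Union>v\<in>X. \<Union>c\<in>?N v. ?P v c)"
  proof
    fix phi assume "phi \<in> star_embeddings k V A X"
    with assms(2) star_embedding_in_slots[of phi k V A X]
    show "phi \<in> (\<Union>v\<in>X. \<Union>c\<in>?N v. ?P v c)" by auto
  qed
  then have "card (star_embeddings k V A X) \<le> card (\<Union>v\<in>X. \<Union>c\<in>?N v. ?P v c)"
    using assms(1) fin by (intro card_mono) auto
  also have "\<dots> \<le> (\<Sum>v\<in>X. card (\<Union>c\<in>?N v. ?P v c))"
    by (rule card_UN_le[OF assms(1)])
  also have "\<dots> \<le> (\<Sum>v\<in>X. \<Sum>c\<in>?N v. card (?P v c))"
    using assms(1) by (intro sum_mono card_UN_le) simp
  finally have "real (card (star_embeddings k V A X)) \<le> (\<Sum>v\<in>X. \<Sum>c\<in>?N v. real (card (?P v c)))"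
    by (simp flip: of_nat_sum)
  also have "\<dots> \<le> (\<Sum>v\<in>X. real (k - 1) ^ (k - 1) / real (k + 1) ^ (k + 1) * real (card X) ^ (k + 1))"
    using assms by (intro sum_mono sum_star_slots_le)
  finally show ?thesis by (simp add: ac_simps)
qed

theorem claim4p9:
  fixes k :: nat and V :: "'a set" and A :: "'a \<Rightarrow> 'a \<Rightarrow> bool"
  assumes "k \<ge> 5"
    and "finite V"
    and "\<forall>x y. A x y \<longrightarrow> x \<in> V \<and> y \<in> V"
    and "\<forall>x. \<not> A x x"
  shows "sX k V A \<le> (real (k - 1) ^ (k - 1) / real (k + 1) ^ (k + 1)) * alpha V A ^ (k + 2)"
proof -
  have "finite (Xset V A)" using assms(2) unfolding Xset_def by simp
  then have "sX k V A \<le> real (k - 1) ^ (k - 1) / real (k + 1) ^ (k + 1)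
                         * real (card (Xset V A)) ^ (k + 2) / real (card V) ^ (k + 2)"
    unfolding sX_def star_embeddings_def[symmetric] using assms(1)
    by (intro divide_right_mono card_star_embeddings_le) auto
  then show ?thesis unfolding alpha_def by (simp add: power_divide)
qed

end
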